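(* Let $a<b$, let $\alpha\in(0,1]$, let $k:[a,b]\to\mathbb{R}$ be a continuous nonnegative map, differentiable at every $t>a$, with $k(t)\neq 0$ and $k'(t)\neq 0$ whenever $t>a$. Let $t\in(a,b)$ with $t>0$ and let $f,g:[a,b]\to\mathbb{R}$ be $\alpha$-differentiable at $t$. Then: (1) $D^{\alpha}(\lambda f+\mu g)(t)=\lambda D^{\alpha}(f)(t)+\mu D^{\alpha}(g)(t)$ for all $\lambda,\mu\in\mathbb{R}$; (2) $D^{\alpha}(s\mapsto s^{n})(t)=\frac{(k(t))^{1-\alpha}}{k'(t)}\,n t^{n-1}$ for all $n\in\mathbb{R}$; (3) $D^{\alpha}(c)(t)=0$ for every constant function $c$; (4) $D^{\alpha}(fg)(t)=f(t)D^{\alpha}(g)(t)+g(t)D^{\alpha}(f)(t)$; (5) if $g(t)\neq 0$, then $D^{\alpha}\left(\frac{f}{g}\right)(t)=\dfrac{g(t)D^{\alpha}(f)(t)-f(t)D^{\alpha}(g)(t)}{[g(t)]^{2}}$; (6) if $g$ is differentiable at $t$ and $f$ (defined on an interval containing the range of $g$) is differentiable at $g(t)$, then $D^{\alpha}(f\circ g)(t)=\frac{(k(t))^{1-\alpha}}{k'(t)}\,f'(g(t))\,g'(t)$.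
   Context: For $k$ as in the claim, a real function $f$ defined near $t\in(a,b)$, and $\alpha\in(0,1]$, the generalized fractional derivative of $f$ of order $\alpha$ at $t$ is $$D^{\alpha}(f)(t)=f^{(\alpha)}(t):=\lim_{\varepsilon\to 0}\frac{f\left(t-k(t)+k(t)\,e^{\varepsilon\frac{(k(t))^{-\alpha}}{k'(t)}}\right)-f(t)}{\varepsilon},$$ and $f$ is called $\alpha$-differentiable at $t$ if this limit exists. *)

theory Defs
  imports "HOL-Analysis.Analysis"
begin

text \<open>Difference quotient of the generalized fractional derivative; k' is the
  derivative of the kernel k (passed explicitly, since k lives on [a,b]).\<close>
definition gfd_quot :: "(real \<Rightarrow> real) \<Rightarrow> (real \<Rightarrow> real) \<Rightarrow> real \<Rightarrow> (real \<Rightarrow> real) \<Rightarrow> real \<Rightarrow> real \<Rightarrow> real" where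
  "gfd_quot k k' \<alpha> f t \<epsilon> =
     (f (t - k t + k t * exp (\<epsilon> * (k t) powr (- \<alpha>) / k' t)) - f t) / \<epsilon>"

definition alpha_differentiable :: "(real \<Rightarrow> real) \<Rightarrow> (real \<Rightarrow> real) \<Rightarrow> real \<Rightarrow> (real \<Rightarrow> real) \<Rightarrow> real \<Rightarrow> bool" where
  "alpha_differentiable k k' \<alpha> f t \<longleftrightarrow> (\<exists>L. (gfd_quot k k' \<alpha> f t \<longlongrightarrow> L) (at 0))"

definition gfd :: "(real \<Rightarrow> real) \<Rightarrow> (real \<Rightarrow> real) \<Rightarrow> real \<Rightarrow> (real \<Rightarrow> real) \<Rightarrow> real \<Rightarrow> real" where
  "gfd k k' \<alpha> f t = Lim (at 0) (gfd_quot k k' \<alpha> f t)"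

end

theory Submission
  imports Defs
begin

text \<open>For the perturbed point \<open>p = gfd_point k k' \<alpha> t\<close> we have \<open>p 0 = t\<close>, and the
  quotient defining the \<open>\<alpha>\<close>-derivative of \<open>h\<close> at \<open>t\<close> is the ordinary difference quotient of
  \<open>h \<circ> p\<close> at \<open>0\<close>. So \<open>\<alpha>\<close>-differentiability makes \<open>h \<circ> p\<close> continuous at \<open>0\<close>, and the sum,
  product and quotient rules follow as for ordinary derivatives; for differentiable \<open>h\<close>
  the chain rule with \<open>p' 0 = k t powr (1 - \<alpha>) / k' t\<close> gives the power and composition rules.\<close>

definition gfd_point :: "(real \<Rightarrow> real) \<Rightarrow> (real \<Rightarrow> real) \<Rightarrow> real \<Rightarrow> real \<Rightarrow> real \<Rightarrow> real" where
  "gfd_point k k' \<alpha> t \<epsilon> = t - k t + k t * exp (\<epsilon> * (k t) powr (- \<alpha>) / k' t)"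

lemma gfd_point_0 [simp]: "gfd_point k k' \<alpha> t 0 = t"
  by (simp add: gfd_point_def)

lemma gfd_quot_eq: "gfd_quot k k' \<alpha> h t \<epsilon> = (h (gfd_point k k' \<alpha> t \<epsilon>) - h t) / \<epsilon>"
  by (simp add: gfd_quot_def gfd_point_def)

lemma gfd_eqI: "(gfd_quot k k' \<alpha> h t \<longlongrightarrow> L) (at 0) \<Longrightarrow> gfd k k' \<alpha> h t = L"
  by (simp add: gfd_def tendsto_Lim)

lemma alpha_differentiable_tendsto_gfd:
  "alpha_differentiable k k' \<alpha> h t \<Longrightarrow> (gfd_quot k k' \<alpha> h t \<longlongrightarrow> gfd k k' \<alpha> h t) (at 0)"
  unfolding alpha_differentiable_def using gfd_eqI by metis

lemma has_real_derivative_gfd_point: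
  assumes "0 < k t"
  shows "(gfd_point k k' \<alpha> t has_real_derivative (k t) powr (1 - \<alpha>) / k' t) (at 0)"
proof -
  have "(gfd_point k k' \<alpha> t has_real_derivative k t * ((k t) powr (- \<alpha>) / k' t)) (at 0)"
    unfolding gfd_point_def times_divide_eq_right[symmetric]
    by (rule derivative_eq_intros refl | simp)+
  moreover have "k t * ((k t) powr (- \<alpha>) / k' t) = (k t) powr (1 - \<alpha>) / k' t"
    using assms by (simp add: powr_diff powr_minus field_simps)
  ultimately show ?thesis by metis
qed

lemma alpha_differentiable_tendsto_gfd_point:
  assumes "alpha_differentiable k k' \<alpha> h t"
  shows "((\<lambda>\<epsilon>. h (gfd_point k k' \<alpha> t \<epsilon>)) \<longlongrightarrow> h t) (at 0)"
proof -
  have "((\<lambda>\<epsilon>. h t + \<epsilon> * gfd_quot k k' \<alpha> h t \<epsilon>) \<longlongrightarrow> h t + 0 * gfd k k' \<alpha> h t) (at 0)"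
    by (intro tendsto_intros alpha_differentiable_tendsto_gfd assms)
  moreover have "\<forall>\<^sub>F \<epsilon> in at 0. h t + \<epsilon> * gfd_quot k k' \<alpha> h t \<epsilon> = h (gfd_point k k' \<alpha> t \<epsilon>)"
    by (simp add: eventually_at_filter gfd_quot_eq)
  ultimately show ?thesis by (simp add: tendsto_cong)
qed

lemma gfd_has_real_derivative:
  assumes "(h has_real_derivative D) (at t)" and "0 < k t"
  shows "gfd k k' \<alpha> h t = (k t) powr (1 - \<alpha>) / k' t * D"
proof (rule gfd_eqI)
  have "((h \<circ> gfd_point k k' \<alpha> t) has_real_derivative D * ((k t) powr (1 - \<alpha>) / k' t)) (at 0)"
    using DERIV_chain[OF _ has_real_derivative_gfd_point] assms by simp
  then have "((\<lambda>\<epsilon>. ((h \<circ> gfd_point k k' \<alpha> t) \<epsilon> - h t) / (\<epsilon> - 0))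
      \<longlongrightarrow> D * ((k t) powr (1 - \<alpha>) / k' t)) (at 0)"
    by (simp add: has_field_derivative_iff)
  then show "(gfd_quot k k' \<alpha> h t \<longlongrightarrow> (k t) powr (1 - \<alpha>) / k' t * D) (at 0)"
    by (simp add: gfd_quot_eq[abs_def] o_def mult.commute)
qed

lemma gfd_const: "gfd k k' \<alpha> (\<lambda>s. c) t = 0"
  by (rule gfd_eqI) (simp add: gfd_quot_def[abs_def])

lemma gfd_powr:
  assumes "0 < t" and "0 < k t"
  shows "gfd k k' \<alpha> (\<lambda>s. s powr n) t = (k t) powr (1 - \<alpha>) / k' t * (n * t powr (n - 1))"
  using gfd_has_real_derivative[where k = k, OF has_real_derivative_powr[OF assms(1)] assms(2)]
  by simp

lemma gfd_compose:
  assumes "g differentiable (at t)" and "f differentiable (at (g t))" and "0 < k t"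
  shows "gfd k k' \<alpha> (f \<circ> g) t = (k t) powr (1 - \<alpha>) / k' t * (deriv f (g t) * deriv g t)"
proof -
  have "((f \<circ> g) has_real_derivative deriv f (g t) * deriv g t) (at t)"
    using assms by (intro DERIV_chain) (auto simp: DERIV_deriv_iff_real_differentiable)
  then show ?thesis using gfd_has_real_derivative assms(3) by blast
qed

lemma gfd_linear:
  assumes "alpha_differentiable k k' \<alpha> f t" and "alpha_differentiable k k' \<alpha> g t"
  shows "gfd k k' \<alpha> (\<lambda>s. l * f s + m * g s) t = l * gfd k k' \<alpha> f t + m * gfd k k' \<alpha> g t"
proof (rule gfd_eqI)
  have "gfd_quot k k' \<alpha> (\<lambda>s. l * f s + m * g s) t
      = (\<lambda>\<epsilon>. l * gfd_quot k k' \<alpha> f t \<epsilon> + m * gfd_quot k k' \<alpha> g t \<epsilon>)"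
    by (simp add: gfd_quot_eq fun_eq_iff add_divide_distrib[symmetric] algebra_simps)
  then show "(gfd_quot k k' \<alpha> (\<lambda>s. l * f s + m * g s) t
      \<longlongrightarrow> l * gfd k k' \<alpha> f t + m * gfd k k' \<alpha> g t) (at 0)"
    by (simp add: tendsto_intros alpha_differentiable_tendsto_gfd assms)
qed

lemma gfd_mult:
  assumes "alpha_differentiable k k' \<alpha> f t" and "alpha_differentiable k k' \<alpha> g t"
  shows "gfd k k' \<alpha> (\<lambda>s. f s * g s) t = f t * gfd k k' \<alpha> g t + g t * gfd k k' \<alpha> f t"
proof (rule gfd_eqI)
  have "gfd_quot k k' \<alpha> (\<lambda>s. f s * g s) t
      = (\<lambda>\<epsilon>. f (gfd_point k k' \<alpha> t \<epsilon>) * gfd_quot k k' \<alpha> g t \<epsilon> + g t * gfd_quot k k' \<alpha> f t \<epsilon>)"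
    by (simp add: gfd_quot_eq fun_eq_iff add_divide_distrib[symmetric] algebra_simps)
  then show "(gfd_quot k k' \<alpha> (\<lambda>s. f s * g s) t
      \<longlongrightarrow> f t * gfd k k' \<alpha> g t + g t * gfd k k' \<alpha> f t) (at 0)"
    by (simp add: tendsto_intros alpha_differentiable_tendsto_gfd
        alpha_differentiable_tendsto_gfd_point assms)
qed

lemma gfd_divide:
  assumes "alpha_differentiable k k' \<alpha> f t" and "alpha_differentiable k k' \<alpha> g t"
    and "g t \<noteq> 0"
  shows "gfd k k' \<alpha> (\<lambda>s. f s / g s) t
    = (g t * gfd k k' \<alpha> f t - f t * gfd k k' \<alpha> g t) / (g t)\<^sup>2"
proof (rule gfd_eqI)
  let ?p = "gfd_point k k' \<alpha> t"
  have g_p: "((\<lambda>\<epsilon>. g (?p \<epsilon>)) \<longlongrightarrow> g t) (at 0)"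
    using alpha_differentiable_tendsto_gfd_point[OF assms(2)] .
  have "((\<lambda>\<epsilon>. (g t * gfd_quot k k' \<alpha> f t \<epsilon> - f t * gfd_quot k k' \<alpha> g t \<epsilon>) / (g (?p \<epsilon>) * g t))
      \<longlongrightarrow> (g t * gfd k k' \<alpha> f t - f t * gfd k k' \<alpha> g t) / (g t * g t)) (at 0)"
    by (intro tendsto_intros alpha_differentiable_tendsto_gfd g_p assms) (simp add: assms(3))
  moreover have "\<forall>\<^sub>F \<epsilon> in at 0. \<epsilon> \<noteq> 0 \<and> g (?p \<epsilon>) \<noteq> 0"
    using tendsto_imp_eventually_ne[OF g_p assms(3)] by (simp add: eventually_at_filter)
  then have "\<forall>\<^sub>F \<epsilon> in at 0.
      (g t * gfd_quot k k' \<alpha> f t \<epsilon> - f t * gfd_quot k k' \<alpha> g t \<epsilon>) / (g (?p \<epsilon>) * g t)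
      = gfd_quot k k' \<alpha> (\<lambda>s. f s / g s) t \<epsilon>"
    by eventually_elim (simp add: gfd_quot_eq assms(3) field_simps)
  ultimately show "(gfd_quot k k' \<alpha> (\<lambda>s. f s / g s) t
      \<longlongrightarrow> (g t * gfd k k' \<alpha> f t - f t * gfd k k' \<alpha> g t) / (g t)\<^sup>2) (at 0)"
    by (simp add: tendsto_cong power2_eq_square)
qed

theorem mainTheorem3:
  fixes a b \<alpha> t :: real and k k' f g :: "real \<Rightarrow> real"
  assumes ab: "a < b"
    and alpha: "0 < \<alpha>" "\<alpha> \<le> 1"
    and k_cont: "continuous_on {a..b} k"
    and k_nonneg: "\<forall>s\<in>{a..b}. 0 \<le> k s"
    and k_deriv: "\<forall>s\<in>{a<..b}. (k has_real_derivative k' s) (at s within {a..b})"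
    and k_nz: "\<forall>s\<in>{a<..b}. k s \<noteq> 0"
    and k'_nz: "\<forall>s\<in>{a<..b}. k' s \<noteq> 0"
    and t: "t \<in> {a<..<b}" "0 < t"
    and f_ad: "alpha_differentiable k k' \<alpha> f t"
    and g_ad: "alpha_differentiable k k' \<alpha> g t"
  shows "(\<forall>l m :: real. gfd k k' \<alpha> (\<lambda>s. l * f s + m * g s) t
                 = l * gfd k k' \<alpha> f t + m * gfd k k' \<alpha> g t)
       \<and> (\<forall>n::real. gfd k k' \<alpha> (\<lambda>s. s powr n) t
                 = (k t) powr (1 - \<alpha>) / k' t * (n * t powr (n - 1)))
       \<and> (\<forall>c::real. gfd k k' \<alpha> (\<lambda>s. c) t = 0)
       \<and> gfd k k' \<alpha> (\<lambda>s. f s * g s) t = f t * gfd k k' \<alpha> g t + g t * gfd k k' \<alpha> f t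
       \<and> (g t \<noteq> 0 \<longrightarrow> gfd k k' \<alpha> (\<lambda>s. f s / g s) t
                 = (g t * gfd k k' \<alpha> f t - f t * gfd k k' \<alpha> g t) / (g t)\<^sup>2)
       \<and> (g differentiable (at t) \<and> f differentiable (at (g t)) \<longrightarrow>
            gfd k k' \<alpha> (f \<circ> g) t = (k t) powr (1 - \<alpha>) / k' t * (deriv f (g t) * deriv g t))"
proof -
  have "0 \<le> k t" and "k t \<noteq> 0"
    using k_nonneg k_nz t(1) by auto
  then have k_pos: "0 < k t" by linarith
  show ?thesis
    using gfd_linear[OF f_ad g_ad] gfd_powr[where k = k, OF t(2) k_pos] gfd_const
      gfd_mult[OF f_ad g_ad] gfd_divide[OF f_ad g_ad] gfd_compose[where k = k, OF _ _ k_pos]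
    by blast
qed

end
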